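(* Under the standing setup with $\mathrm{Var}(X_N)>0$, the following bounds on $Y^0$ hold and each is sharp under its stated sign assumptions (absent additional information): (1) if $\delta_B\ge0$: $Y^0\in[Y^{0-}_{MOB},Y^0_{NM}]$; if $\delta_B\le0$: $Y^0\in[Y^0_{NM},Y^{0+}_{MOB}]$; (2) if $\delta_W\ge0$: $Y^0\in[\max\{Y^0_{ER},Y^{0-}_{MOB}\},Y^{0+}_{MOB}]$; if $\delta_W\le0$: $Y^0\in[Y^{0-}_{MOB},\min\{Y^0_{ER},Y^{0+}_{MOB}\}]$; (3) if $\delta_W\ge0$ and $\delta_B\ge0$: $\max\{Y^0_{ER},Y^{0-}_{MOB}\}\le Y^0\le Y^0_{NM}$; if $\delta_W\le0$ and $\delta_B\le0$: $Y^0_{NM}\le Y^0\le\min\{Y^0_{ER},Y^{0+}_{MOB}\}$; (4) if $\delta_W\ge0$ and $\delta_B\le0$: $Y^0\in[\max\{Y^{0-}_{MOB},Y^0_{ER},Y^0_{NM}\},Y^{0+}_{MOB}]$; if $\delta_W\le0$ and $\delta_B\ge0$: $Y^0\in[Y^{0-}_{MOB},\min\{Y^0_{NM},Y^0_{ER},Y^{0+}_{MOB}\}]$; (5) if $\delta_W=0$ then $Y^0=Y^0_{ER}$; if $\delta_B=0$ then $Y^0=Y^0_{NM}$; if $\delta_W=\delta_B=0$ then $Y^0=Y^1$.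
   Context: Let $(X,Y,N)$ be a random triple with $X\in\{0,1\}$, $Y$ real-valued, $N$ taking values in a finite set $\mathcal N$. Write $p_n=\Pr(N=n)$, $X_n=\mathbb E[X\mid N=n]$, $Y_n=\mathbb E[Y\mid N=n]$, $X_N=\mathbb E[X\mid N]$, $Y_N=\mathbb E[Y\mid N]$. Assume some $n$ has $p_n>0$ and $X_n\in(0,1)$, and fix reals $\underline Y\le\overline Y$ with $\mathbb E[Y\mid X=x,N=n]\in[\underline Y,\overline Y]$ whenever $\Pr(X=x,N=n)>0$. $Y^x=\mathbb E[Y\mid X=x]$; $\delta_B=\mathbb E[\mathrm{Cov}(Y,X\mid N)]$; $\delta_W=\mathbb E[\mathrm{Cov}(Y,X_N\mid X)]$; $D_{ER}=\mathrm{Cov}(Y_N,X_N)/\mathrm{Var}(X_N)$; $Y^0_{ER}=\mathbb E[Y_N]-D_{ER}\,\mathbb E[X_N]$; $Y^0_{NM}=\mathbb E[(1-X_N)Y_N]/\mathbb E[1-X_N]$; $Y^{0-}_{MOB}=\mathbb E[\max\{Y_N-\overline Y X_N,\underline Y(1-X_N)\}]/(1-\mathbb E[X])$; $Y^{0+}_{MOB}=\mathbb E[\min\{Y_N-\underline Y X_N,\overline Y(1-X_N)\}]/(1-\mathbb E[X])$. Sharpness under an assumption $\mathcal A$: the parameter lies in the interval for every joint distribution satisfying the standing assumptions and $\mathcal A$, and every value in the interval is attained by some joint distribution of $(X,Y,N)$ with the same observed $(p_n,X_n,Y_n)_n$, satisfying the standing bound and $\mathcal A$. *)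

theory Defs
  imports "HOL-Probability.Probability"
begin

text \<open>A joint distribution of (X,Y,N) is a probability measure on the outcome
  space bool \<times> real \<times> 'n (X = first, Y = second, N = third component),
  with the product sigma algebra.\<close>

type_synonym 'n outcome = "bool \<times> real \<times> 'n"

definition Xv :: "'n outcome \<Rightarrow> real" where
  "Xv \<omega> = (if fst \<omega> then 1 else 0)"

definition Yv :: "'n outcome \<Rightarrow> real" where
  "Yv \<omega> = fst (snd \<omega>)"

definition Nv :: "'n outcome \<Rightarrow> 'n" where
  "Nv \<omega> = snd (snd \<omega>)"

definition cE :: "'n outcome measure \<Rightarrow> 'n outcome set \<Rightarrow> ('n outcome \<Rightarrow> real) \<Rightarrow> real" where
  "cE M A f = (\<integral>\<omega>. indicator A \<omega> * f \<omega> \<partial>M) / measure M A"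

definition cellN :: "'n \<Rightarrow> 'n outcome set" where
  "cellN n = {\<omega>. Nv \<omega> = n}"

definition cellX :: "bool \<Rightarrow> 'n outcome set" where
  "cellX x = {\<omega>. fst \<omega> = x}"

definition cellXN :: "bool \<Rightarrow> 'n \<Rightarrow> 'n outcome set" where
  "cellXN x n = {\<omega>. fst \<omega> = x \<and> Nv \<omega> = n}"

definition condN :: "'n outcome measure \<Rightarrow> ('n outcome \<Rightarrow> real) \<Rightarrow> 'n \<Rightarrow> real" where
  "condN M f n = cE M (cellN n) f"

definition condX :: "'n outcome measure \<Rightarrow> ('n outcome \<Rightarrow> real) \<Rightarrow> bool \<Rightarrow> real" where
  "condX M f x = cE M (cellX x) f"

definition pN :: "'n outcome measure \<Rightarrow> 'n \<Rightarrow> real" where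
  "pN M n = measure M (cellN n)"

definition XNn :: "'n outcome measure \<Rightarrow> 'n \<Rightarrow> real" where
  "XNn M n = condN M Xv n"

definition YNn :: "'n outcome measure \<Rightarrow> 'n \<Rightarrow> real" where
  "YNn M n = condN M Yv n"

definition XN :: "'n outcome measure \<Rightarrow> 'n outcome \<Rightarrow> real" where
  "XN M \<omega> = XNn M (Nv \<omega>)"

definition YN :: "'n outcome measure \<Rightarrow> 'n outcome \<Rightarrow> real" where
  "YN M \<omega> = YNn M (Nv \<omega>)"

definition obs :: "'n outcome measure \<Rightarrow> 'n \<Rightarrow> real \<times> real \<times> real" where
  "obs M n = (pN M n, XNn M n, YNn M n)"

definition EE :: "'n outcome measure \<Rightarrow> ('n outcome \<Rightarrow> real) \<Rightarrow> real" where
  "EE M f = (\<integral>\<omega>. f \<omega> \<partial>M)"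

definition standing :: "real \<Rightarrow> real \<Rightarrow> ('n::finite) outcome measure \<Rightarrow> bool" where
  "standing Ylo Yhi M \<longleftrightarrow>
     prob_space M \<and>
     sets M = sets (count_space UNIV \<Otimes>\<^sub>M (lborel \<Otimes>\<^sub>M count_space UNIV)) \<and>
     integrable M Yv \<and>
     (\<exists>n. pN M n > 0 \<and> 0 < XNn M n \<and> XNn M n < 1) \<and>
     (\<forall>x n. measure M (cellXN x n) > 0 \<longrightarrow>
        Ylo \<le> cE M (cellXN x n) Yv \<and> cE M (cellXN x n) Yv \<le> Yhi)"

definition Y0 :: "'n outcome measure \<Rightarrow> real" where
  "Y0 M = condX M Yv False"

definition Y1 :: "'n outcome measure \<Rightarrow> real" where
  "Y1 M = condX M Yv True"

definition deltaB :: "'n outcome measure \<Rightarrow> real" where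
  "deltaB M = EE M (\<lambda>\<omega>. condN M (\<lambda>\<omega>'. Yv \<omega>' * Xv \<omega>') (Nv \<omega>)
                        - condN M Yv (Nv \<omega>) * condN M Xv (Nv \<omega>))"

definition deltaW :: "'n outcome measure \<Rightarrow> real" where
  "deltaW M = EE M (\<lambda>\<omega>. condX M (\<lambda>\<omega>'. Yv \<omega>' * XN M \<omega>') (fst \<omega>)
                        - condX M Yv (fst \<omega>) * condX M (XN M) (fst \<omega>))"

definition VarXN :: "'n outcome measure \<Rightarrow> real" where
  "VarXN M = EE M (\<lambda>\<omega>. (XN M \<omega> - EE M (XN M))\<^sup>2)"

definition CovYNXN :: "'n outcome measure \<Rightarrow> real" where
  "CovYNXN M = EE M (\<lambda>\<omega>. (YN M \<omega> - EE M (YN M)) * (XN M \<omega> - EE M (XN M)))"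

definition D_ER :: "'n outcome measure \<Rightarrow> real" where
  "D_ER M = CovYNXN M / VarXN M"

definition Y0_ER :: "'n outcome measure \<Rightarrow> real" where
  "Y0_ER M = EE M (YN M) - D_ER M * EE M (XN M)"

definition Y0_NM :: "'n outcome measure \<Rightarrow> real" where
  "Y0_NM M = EE M (\<lambda>\<omega>. (1 - XN M \<omega>) * YN M \<omega>) / EE M (\<lambda>\<omega>. 1 - XN M \<omega>)"

definition Y0_MOB_lo :: "real \<Rightarrow> real \<Rightarrow> 'n outcome measure \<Rightarrow> real" where
  "Y0_MOB_lo Ylo Yhi M =
     EE M (\<lambda>\<omega>. max (YN M \<omega> - Yhi * XN M \<omega>) (Ylo * (1 - XN M \<omega>))) / (1 - EE M Xv)"

definition Y0_MOB_hi :: "real \<Rightarrow> real \<Rightarrow> 'n outcome measure \<Rightarrow> real" where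
  "Y0_MOB_hi Ylo Yhi M =
     EE M (\<lambda>\<omega>. min (YN M \<omega> - Ylo * XN M \<omega>) (Yhi * (1 - XN M \<omega>))) / (1 - EE M Xv)"

definition sharp_bound ::
  "real \<Rightarrow> real \<Rightarrow> (('n::finite) outcome measure \<Rightarrow> bool) \<Rightarrow> ('n outcome measure \<Rightarrow> real)
     \<Rightarrow> ('n outcome measure \<Rightarrow> real) \<Rightarrow> 'n outcome measure \<Rightarrow> bool" where
  "sharp_bound Ylo Yhi A lo hi M \<longleftrightarrow>
     (\<forall>M'. standing Ylo Yhi M' \<and> obs M' = obs M \<and> A M' \<longrightarrow> lo M' \<le> Y0 M' \<and> Y0 M' \<le> hi M') \<and>
     (\<forall>y. lo M \<le> y \<and> y \<le> hi M \<longrightarrow>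
        (\<exists>M'. standing Ylo Yhi M' \<and> obs M' = obs M \<and> A M' \<and> Y0 M' = y))"

end

theory Submission
  imports Defs
begin

text \<open>All quantities in the theorem are determined by the observed triples (p_n, X_n, Y_n)
  together with the unobserved untreated parts c_n = E[Y; X = 0, N = n]: Y^0 = (sum c_n) / (1 - E X),
  while delta_B = (1 - E X) (Y^0_NM - Y^0) and delta_W E X = (Y^0 - Y^0_ER) Var(X_N).
  The bounds on the cell means confine each c_n to an interval whose end points sum to the MOB bounds.
  Conversely, every choice of the c_n in these intervals is realised by a law with one atom per
  (X, N)-cell and the same observables, so Y^0 sweeps out the whole MOB interval, and the sign
  assumptions on delta_B and delta_W cut it at Y^0_NM and Y^0_ER. If both deltas vanish, the two
  resulting linear equations force E[X_N Y_N] = E X E Y, because Var(X_N) < Var(X); hence Y^0 = Y^1.\<close>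

subsection \<open>Weighted sums and moment identities\<close>

lemma weighted_covariance:
  fixes p f g :: "'a \<Rightarrow> real"
  assumes "sum p I = 1"
  shows "(\<Sum>n\<in>I. p n * ((f n - (\<Sum>k\<in>I. p k * f k)) * (g n - (\<Sum>k\<in>I. p k * g k))))
    = (\<Sum>n\<in>I. p n * f n * g n) - (\<Sum>n\<in>I. p n * f n) * (\<Sum>n\<in>I. p n * g n)"
proof -
  define a where "a = (\<Sum>k\<in>I. p k * f k)"
  define b where "b = (\<Sum>k\<in>I. p k * g k)"
  have "(\<Sum>n\<in>I. p n * ((f n - a) * (g n - b)))
      = (\<Sum>n\<in>I. p n * f n * g n) - b * (\<Sum>n\<in>I. p n * f n) - a * (\<Sum>n\<in>I. p n * g n) + a * b * sum p I"
    by (simp add: algebra_simps sum.distrib sum_subtractf sum_distrib_left)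
  then show ?thesis using assms by (simp add: a_def b_def)
qed

lemma sum_attains_between:
  fixes lo up :: "'a \<Rightarrow> real"
  assumes "\<And>n. n \<in> I \<Longrightarrow> lo n \<le> up n" "sum lo I \<le> t" "t \<le> sum up I"
  shows "\<exists>c. (\<forall>n\<in>I. lo n \<le> c n \<and> c n \<le> up n) \<and> sum c I = t"
proof -
  define \<theta> where "\<theta> = (if sum up I = sum lo I then 0 else (t - sum lo I) / (sum up I - sum lo I))"
  have \<theta>: "0 \<le> \<theta>" "\<theta> \<le> 1" "sum lo I + \<theta> * (sum up I - sum lo I) = t"
    using assms(2,3) by (auto simp: \<theta>_def field_simps)
  define c where "c n = lo n + \<theta> * (up n - lo n)" for n
  have "lo n \<le> c n \<and> c n \<le> up n" if "n \<in> I" for n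
    using assms(1)[OF that] \<theta>(1,2) mult_left_le[of \<theta> "up n - lo n"] by (simp add: c_def mult.commute)
  moreover have "sum c I = t"
    using \<theta>(3) by (simp add: c_def sum.distrib sum_subtractf sum_distrib_left[symmetric])
  ultimately show ?thesis by blast
qed

text \<open>With A = E X, S = E[X_N^2], E = E Y, K = E[X_N Y_N] and C = E[(1 - X) Y], the left side is
  delta_W E X and the right side is (Y^0 - Y^0_ER) Var(X_N).\<close>

lemma deltaW_moment_identity:
  fixes A C E K S :: real
  assumes "A \<noteq> 0" "A \<noteq> 1" "S \<noteq> A\<^sup>2"
  shows "(K - (E - C) * S / A - C * (A - S) / (1 - A)) * A
    = (C / (1 - A) - (E - (K - A * E) / (S - A\<^sup>2) * A)) * (S - A\<^sup>2)"
proof -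
  have B: "1 - A \<noteq> 0" and V: "S - A\<^sup>2 \<noteq> 0" using assms by auto
  have "(K - (E - C) * S / A - C * (A - S) / (1 - A)) * A = K * A - (E - C) * S - C * A * (A - S) / (1 - A)"
    using assms(1) by (simp add: field_simps)
  also have "\<dots> = C * (S - A\<^sup>2) / (1 - A) - E * (S - A\<^sup>2) + (K - A * E) * A"
    using B by (simp add: field_simps power2_eq_square)
  also have "\<dots> = (C / (1 - A) - (E - (K - A * E) / (S - A\<^sup>2) * A)) * (S - A\<^sup>2)"
    using V by (simp add: field_simps)
  finally show ?thesis .
qed

lemma Y1_moment_identity:
  fixes A C E K S :: real
  assumes "A \<noteq> 0" "A \<noteq> 1" "S \<noteq> A\<^sup>2" "S \<noteq> A"
    and NM: "C / (1 - A) = (E - K) / (1 - A)"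
    and ER: "C / (1 - A) = E - (K - A * E) / (S - A\<^sup>2) * A"
  shows "C / (1 - A) = (E - C) / A"
proof -
  have B: "1 - A \<noteq> 0" and V: "S - A\<^sup>2 \<noteq> 0" using assms by auto
  have C: "C = E - K" using NM B by (simp add: divide_cancel_right)
  have "(K - A * E) / (1 - A) = (K - A * E) / (S - A\<^sup>2) * A"
    using ER B unfolding C by (simp add: field_simps)
  then have "(K - A * E) * (S - A) = 0"
    using B V by (simp add: field_simps power2_eq_square)
  then have "K = A * E" using assms(4) by simp
  then show ?thesis using assms(1) B unfolding C by (simp add: field_simps)
qed

subsection \<open>Cell decomposition of an outcome law\<close>

definition outcome_space :: "('n::finite) outcome measure" where
  "outcome_space = count_space UNIV \<Otimes>\<^sub>M (lborel \<Otimes>\<^sub>M count_space UNIV)"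

definition outcome_law :: "('n::finite) outcome measure \<Rightarrow> bool" where
  "outcome_law M \<longleftrightarrow> prob_space M \<and> sets M = sets outcome_space \<and> integrable M Yv"

definition cell_integral :: "'n outcome measure \<Rightarrow> bool \<Rightarrow> 'n \<Rightarrow> ('n outcome \<Rightarrow> real) \<Rightarrow> real" where
  "cell_integral M x n f = (\<integral>\<omega>. indicator (cellXN x n) \<omega> * f \<omega> \<partial>M)"

definition untreated_part :: "'n outcome measure \<Rightarrow> 'n \<Rightarrow> real" where
  "untreated_part M n = cell_integral M False n Yv"

definition EN :: "('n::finite) outcome measure \<Rightarrow> ('n \<Rightarrow> real) \<Rightarrow> real" where
  "EN M h = (\<Sum>n\<in>UNIV. pN M n * h n)"

lemma standing_outcome_law: "standing Ylo Yhi M \<Longrightarrow> outcome_law M"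
  by (simp add: standing_def outcome_law_def outcome_space_def)

lemma space_outcome_space: "space (outcome_space :: ('n::finite) outcome measure) = UNIV"
  by (simp add: outcome_space_def space_pair_measure)

lemma cellXN_in_outcome_space: "cellXN x n \<in> sets (outcome_space :: ('n::finite) outcome measure)"
proof -
  have "{\<omega> \<in> space (outcome_space :: 'n outcome measure). fst \<omega> = x \<and> snd (snd \<omega>) = n} \<in> sets outcome_space"
    unfolding outcome_space_def by measurable
  then show ?thesis by (simp add: cellXN_def Nv_def space_outcome_space)
qed

lemma Yv_measurable: "Yv \<in> borel_measurable (outcome_space :: ('n::finite) outcome measure)"
  unfolding outcome_space_def Yv_def by measurable

lemma sum_cell_indicators:
  fixes g :: "bool \<Rightarrow> ('n::finite) \<Rightarrow> real"
  shows "(\<Sum>x\<in>UNIV. \<Sum>n\<in>UNIV. g x n * (indicator (cellXN x n) \<omega> * f \<omega>)) = g (fst \<omega>) (Nv \<omega>) * f \<omega>"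
proof -
  have "g x n * (indicator (cellXN x n) \<omega> * f \<omega>)
      = (if x = fst \<omega> then if n = Nv \<omega> then g x n * f \<omega> else 0 else 0)" for x n
    by (auto simp: indicator_def cellXN_def)
  then show ?thesis by (cases "fst \<omega>") (simp_all add: UNIV_bool)
qed

context
  fixes M :: "('n::finite) outcome measure"
  assumes law: "outcome_law M"
begin

lemma outcome_law_cellXN: "cellXN x n \<in> sets M"
  using law cellXN_in_outcome_space by (metis outcome_law_def)

lemma integral_by_cells:
  assumes "integrable M f" "\<And>\<omega>. G \<omega> = g (fst \<omega>) (Nv \<omega>)"
  shows "(\<integral>\<omega>. G \<omega> * f \<omega> \<partial>M) = (\<Sum>x\<in>UNIV. \<Sum>n\<in>UNIV. g x n * cell_integral M x n f)"
proof -
  have "integrable M (\<lambda>\<omega>. indicator (cellXN x n) \<omega> * f \<omega>)" for x n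
    using integrable_real_mult_indicator[OF outcome_law_cellXN assms(1)] by (simp add: mult.commute)
  then have "(\<integral>\<omega>. (\<Sum>x\<in>UNIV. \<Sum>n\<in>UNIV. g x n * (indicator (cellXN x n) \<omega> * f \<omega>)) \<partial>M)
      = (\<Sum>x\<in>UNIV. \<Sum>n\<in>UNIV. g x n * cell_integral M x n f)"
    by (simp add: cell_integral_def integral_sum)
  then show ?thesis by (simp add: sum_cell_indicators assms(2))
qed

lemma cell_integral_one: "cell_integral M x n (\<lambda>_. 1) = measure M (cellXN x n)"
proof -
  interpret prob_space M using law by (simp add: outcome_law_def)
  show ?thesis by (simp add: cell_integral_def outcome_law_cellXN)
qed

lemma integral_by_cell_measures:
  assumes "\<And>\<omega>. G \<omega> = g (fst \<omega>) (Nv \<omega>)"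
  shows "(\<integral>\<omega>. G \<omega> \<partial>M) = (\<Sum>x\<in>UNIV. \<Sum>n\<in>UNIV. g x n * measure M (cellXN x n))"
proof -
  interpret prob_space M using law by (simp add: outcome_law_def)
  have "integrable M (\<lambda>_. 1::real)" by simp
  from integral_by_cells[where G=G and g=g, OF this assms] show ?thesis
    by (simp add: cell_integral_one)
qed

lemma cell_integral_null:
  assumes "measure M (cellXN x n) = 0"
  shows "cell_integral M x n f = 0"
proof -
  interpret prob_space M using law by (simp add: outcome_law_def)
  have "cellXN x n \<in> null_sets M"
    using assms outcome_law_cellXN by (simp add: null_sets_def emeasure_eq_measure)
  then have "AE \<omega> in M. indicator (cellXN x n) \<omega> * f \<omega> = 0"
    by (rule AE_not_in[THEN AE_mp]) simp
  then show ?thesis unfolding cell_integral_def by (rule integral_eq_zero_AE)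
qed

lemma cellN_cells: "cellN n = cellXN True n \<union> cellXN False n"
  by (auto simp: cellN_def cellXN_def)

lemma cellX_cells: "cellX x = (\<Union>n. cellXN x n)"
  by (auto simp: cellX_def cellXN_def)

lemma pN_cells: "pN M n = measure M (cellXN True n) + measure M (cellXN False n)"
proof -
  interpret prob_space M using law by (simp add: outcome_law_def)
  have "cellXN True n \<inter> cellXN False n = {}" by (auto simp: cellXN_def)
  then show ?thesis unfolding pN_def cellN_cells
    by (intro finite_measure_Union outcome_law_cellXN)
qed

lemma measure_cellX: "measure M (cellX x) = (\<Sum>n\<in>UNIV. measure M (cellXN x n))"
proof -
  interpret prob_space M using law by (simp add: outcome_law_def)
  show ?thesis unfolding cellX_cells
    by (rule finite_measure_finite_Union)
      (use outcome_law_cellXN in \<open>auto simp: disjoint_family_on_def cellXN_def\<close>)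
qed

lemma sum_pN: "(\<Sum>n\<in>UNIV. pN M n) = 1"
proof -
  interpret prob_space M using law by (simp add: outcome_law_def)
  have "(\<integral>\<omega>. 1 \<partial>M) = (\<Sum>x\<in>UNIV. \<Sum>n\<in>UNIV. 1 * measure M (cellXN x n))"
    by (rule integral_by_cell_measures) simp
  then show ?thesis using prob_space by (simp add: pN_cells sum.distrib UNIV_bool add.commute)
qed

text \<open>The next two formulas also hold when pN M n = 0, both sides being 0 as x / 0 = 0.\<close>

lemma XNn_cells: "XNn M n = measure M (cellXN True n) / pN M n"
proof -
  have "(\<integral>\<omega>. indicator (cellN n) \<omega> * Xv \<omega> \<partial>M)
      = (\<Sum>x\<in>UNIV. \<Sum>k\<in>UNIV. of_bool (x \<and> k = n) * measure M (cellXN x k))"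
    by (rule integral_by_cell_measures) (simp add: indicator_def cellN_def Xv_def)
  then show ?thesis by (simp add: XNn_def condN_def cE_def pN_def UNIV_bool)
qed

lemma YNn_cells: "YNn M n = (cell_integral M True n Yv + untreated_part M n) / pN M n"
proof -
  have "(\<integral>\<omega>. indicator (cellN n) \<omega> * Yv \<omega> \<partial>M)
      = (\<Sum>x\<in>UNIV. \<Sum>k\<in>UNIV. of_bool (k = n) * cell_integral M x k Yv)"
    using law by (intro integral_by_cells) (auto simp: outcome_law_def indicator_def cellN_def)
  then show ?thesis by (simp add: YNn_def condN_def cE_def pN_def untreated_part_def UNIV_bool)
qed

lemma EE_fun_N: "EE M (\<lambda>\<omega>. h (Nv \<omega>)) = EN M h"
proof -
  have "(\<integral>\<omega>. h (Nv \<omega>) \<partial>M) = (\<Sum>x\<in>UNIV. \<Sum>n\<in>UNIV. h n * measure M (cellXN x n))"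
    by (rule integral_by_cell_measures) simp
  then show ?thesis by (simp add: EE_def EN_def pN_cells UNIV_bool sum.distrib algebra_simps)
qed

lemma EE_fun_X: "EE M (\<lambda>\<omega>. h (fst \<omega>)) = h True * measure M (cellX True) + h False * measure M (cellX False)"
proof -
  have "(\<integral>\<omega>. h (fst \<omega>) \<partial>M) = (\<Sum>x\<in>UNIV. \<Sum>n\<in>UNIV. h x * measure M (cellXN x n))"
    by (rule integral_by_cell_measures) simp
  then show ?thesis by (simp add: EE_def measure_cellX UNIV_bool sum_distrib_left)
qed

lemma integral_cellX:
  assumes "integrable M f"
  shows "(\<integral>\<omega>. indicator (cellX x) \<omega> * (h (Nv \<omega>) * f \<omega>) \<partial>M) = (\<Sum>n\<in>UNIV. h n * cell_integral M x n f)"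
proof -
  have "(\<integral>\<omega>. (indicator (cellX x) \<omega> * h (Nv \<omega>)) * f \<omega> \<partial>M)
      = (\<Sum>y\<in>UNIV. \<Sum>n\<in>UNIV. (of_bool (y = x) * h n) * cell_integral M y n f)"
    by (rule integral_by_cells[OF assms]) (simp add: indicator_def cellX_def)
  then show ?thesis by (cases x) (simp_all add: UNIV_bool mult.assoc)
qed

lemma measure_cellXN_True: "measure M (cellXN True n) = pN M n * XNn M n"
proof (cases "pN M n = 0")
  case True
  then show ?thesis using pN_cells[of n] by (simp add: add_nonneg_eq_0_iff)
qed (simp add: XNn_cells)

lemma measure_cellXN_False: "measure M (cellXN False n) = pN M n * (1 - XNn M n)"
  using pN_cells[of n] measure_cellXN_True[of n] by (simp add: algebra_simps)

lemma cell_integral_True_Yv: "cell_integral M True n Yv = pN M n * YNn M n - untreated_part M n"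
proof (cases "pN M n = 0")
  case True
  then have "measure M (cellXN x n) = 0" for x
    using pN_cells[of n] by (cases x) (simp_all add: add_nonneg_eq_0_iff)
  then show ?thesis using True by (simp add: cell_integral_null untreated_part_def)
qed (simp add: YNn_cells)

lemma measure_cellX_True: "measure M (cellX True) = EN M (XNn M)"
  by (simp add: measure_cellX measure_cellXN_True EN_def)

lemma measure_cellX_False: "measure M (cellX False) = 1 - EN M (XNn M)"
  using sum_pN by (simp add: measure_cellX measure_cellXN_False EN_def algebra_simps sum_subtractf)

lemma EE_Xv: "EE M Xv = EN M (XNn M)"
proof -
  have "Xv = (\<lambda>\<omega>::'n outcome. if fst \<omega> then 1 else 0)" by (simp add: fun_eq_iff Xv_def)
  with EE_fun_X[of "\<lambda>x. if x then 1 else 0"] show ?thesis by (simp add: measure_cellX_True)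
qed

lemma condX_by_cells:
  assumes "integrable M f"
  shows "condX M (\<lambda>\<omega>. h (Nv \<omega>) * f \<omega>) x = (\<Sum>n\<in>UNIV. h n * cell_integral M x n f) / measure M (cellX x)"
  by (simp add: condX_def cE_def integral_cellX[OF assms])

lemma condX_Yv: "condX M Yv x = (\<Sum>n\<in>UNIV. cell_integral M x n Yv) / measure M (cellX x)"
  using law condX_by_cells[of Yv "\<lambda>_. 1"] by (simp add: outcome_law_def)

lemma Y0_eq: "Y0 M = (\<Sum>n\<in>UNIV. untreated_part M n) / (1 - EN M (XNn M))"
  by (simp add: Y0_def condX_Yv measure_cellX_False untreated_part_def)

lemma Y1_eq: "Y1 M = (EN M (YNn M) - (\<Sum>n\<in>UNIV. untreated_part M n)) / EN M (XNn M)"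
  by (simp add: Y1_def condX_Yv measure_cellX_True cell_integral_True_Yv sum_subtractf EN_def)

lemma Y0_NM_eq: "Y0_NM M = EN M (\<lambda>n. (1 - XNn M n) * YNn M n) / (1 - EN M (XNn M))"
proof -
  have "EE M (\<lambda>\<omega>. 1 - XN M \<omega>) = 1 - EN M (XNn M)"
    using EE_fun_N[of "\<lambda>n. 1 - XNn M n"] sum_pN
    by (simp add: XN_def EN_def algebra_simps sum_subtractf)
  then show ?thesis
    using EE_fun_N[of "\<lambda>n. (1 - XNn M n) * YNn M n"] by (simp add: Y0_NM_def XN_def YN_def)
qed

lemma EE_XN: "EE M (XN M) = EN M (XNn M)"
  using EE_fun_N[of "XNn M"] by (simp add: XN_def[abs_def])

lemma EE_YN: "EE M (YN M) = EN M (YNn M)"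
  using EE_fun_N[of "YNn M"] by (simp add: YN_def[abs_def])

lemma VarXN_eq: "VarXN M = EN M (\<lambda>n. (XNn M n)\<^sup>2) - (EN M (XNn M))\<^sup>2"
  using EE_fun_N[of "\<lambda>n. (XNn M n - EN M (XNn M))\<^sup>2"]
    weighted_covariance[OF sum_pN, of "XNn M" "XNn M"]
  by (simp add: VarXN_def EE_XN XN_def EN_def power2_eq_square mult.assoc)

lemma CovYNXN_eq: "CovYNXN M = EN M (\<lambda>n. XNn M n * YNn M n) - EN M (XNn M) * EN M (YNn M)"
  using EE_fun_N[of "\<lambda>n. (YNn M n - EN M (YNn M)) * (XNn M n - EN M (XNn M))"]
    weighted_covariance[OF sum_pN, of "YNn M" "XNn M"]
  by (simp add: CovYNXN_def EE_XN EE_YN XN_def YN_def EN_def mult_ac)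

lemma Y0_ER_eq:
  "Y0_ER M = EN M (YNn M) - (EN M (\<lambda>n. XNn M n * YNn M n) - EN M (XNn M) * EN M (YNn M))
      / (EN M (\<lambda>n. (XNn M n)\<^sup>2) - (EN M (XNn M))\<^sup>2) * EN M (XNn M)"
  by (simp add: Y0_ER_def D_ER_def VarXN_eq CovYNXN_eq EE_XN EE_YN)

lemma Y0_MOB_lo_eq:
  "Y0_MOB_lo Ylo Yhi M = EN M (\<lambda>n. max (YNn M n - Yhi * XNn M n) (Ylo * (1 - XNn M n))) / (1 - EN M (XNn M))"
  using EE_fun_N[of "\<lambda>n. max (YNn M n - Yhi * XNn M n) (Ylo * (1 - XNn M n))"]
  by (simp add: Y0_MOB_lo_def EE_Xv XN_def YN_def)

lemma Y0_MOB_hi_eq: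
  "Y0_MOB_hi Ylo Yhi M = EN M (\<lambda>n. min (YNn M n - Ylo * XNn M n) (Yhi * (1 - XNn M n))) / (1 - EN M (XNn M))"
  using EE_fun_N[of "\<lambda>n. min (YNn M n - Ylo * XNn M n) (Yhi * (1 - XNn M n))"]
  by (simp add: Y0_MOB_hi_def EE_Xv XN_def YN_def)

lemma pN_condN_YX: "pN M n * condN M (\<lambda>\<omega>. Yv \<omega> * Xv \<omega>) n = cell_integral M True n Yv"
proof -
  have "(\<integral>\<omega>. (indicator (cellN n) \<omega> * Xv \<omega>) * Yv \<omega> \<partial>M)
      = (\<Sum>x\<in>UNIV. \<Sum>k\<in>UNIV. of_bool (x \<and> k = n) * cell_integral M x k Yv)"
    using law by (intro integral_by_cells) (auto simp: outcome_law_def indicator_def cellN_def Xv_def)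
  then have "condN M (\<lambda>\<omega>. Yv \<omega> * Xv \<omega>) n = cell_integral M True n Yv / pN M n"
    by (simp add: condN_def cE_def pN_def UNIV_bool mult_ac)
  moreover have "pN M n = 0 \<Longrightarrow> cell_integral M True n Yv = 0"
    by (simp add: cell_integral_True_Yv untreated_part_def cell_integral_null measure_cellXN_False)
  ultimately show ?thesis by auto
qed

lemma deltaB_eq: "deltaB M = EN M (\<lambda>n. (1 - XNn M n) * YNn M n) - (\<Sum>n\<in>UNIV. untreated_part M n)"
proof -
  have "deltaB M = (\<Sum>n\<in>UNIV. pN M n * condN M (\<lambda>\<omega>. Yv \<omega> * Xv \<omega>) n - pN M n * (YNn M n * XNn M n))"
    using EE_fun_N[of "\<lambda>n. condN M (\<lambda>\<omega>. Yv \<omega> * Xv \<omega>) n - YNn M n * XNn M n"]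
    by (simp add: deltaB_def EN_def YNn_def XNn_def right_diff_distrib)
  also have "\<dots> = (\<Sum>n\<in>UNIV. pN M n * ((1 - XNn M n) * YNn M n) - untreated_part M n)"
    by (rule sum.cong[OF refl]) (simp only: pN_condN_YX cell_integral_True_Yv, simp add: algebra_simps)
  finally show ?thesis by (simp add: EN_def sum_subtractf)
qed

lemma condX_XN: "condX M (XN M) x = (\<Sum>n\<in>UNIV. XNn M n * measure M (cellXN x n)) / measure M (cellX x)"
proof -
  interpret prob_space M using law by (simp add: outcome_law_def)
  have "integrable M (\<lambda>_. 1::real)" by simp
  from condX_by_cells[OF this, of "XNn M" x] show ?thesis by (simp add: XN_def[abs_def] cell_integral_one)
qed

lemma condX_Yv_XN:
  "condX M (\<lambda>\<omega>. Yv \<omega> * XN M \<omega>) x = (\<Sum>n\<in>UNIV. XNn M n * cell_integral M x n Yv) / measure M (cellX x)"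
proof -
  have "(\<lambda>\<omega>. Yv \<omega> * XN M \<omega>) = (\<lambda>\<omega>. XNn M (Nv \<omega>) * Yv \<omega>)" by (simp add: XN_def mult.commute)
  then show ?thesis using law by (simp add: condX_by_cells outcome_law_def)
qed

lemma deltaW_eq:
  assumes "EN M (XNn M) \<noteq> 0" "EN M (XNn M) \<noteq> 1"
  shows "deltaW M = EN M (\<lambda>n. XNn M n * YNn M n)
    - (EN M (YNn M) - (\<Sum>n\<in>UNIV. untreated_part M n)) * EN M (\<lambda>n. (XNn M n)\<^sup>2) / EN M (XNn M)
    - (\<Sum>n\<in>UNIV. untreated_part M n) * (EN M (XNn M) - EN M (\<lambda>n. (XNn M n)\<^sup>2)) / (1 - EN M (XNn M))"
proof -
  define A E K S C J where "A = EN M (XNn M)" "E = EN M (YNn M)" "K = EN M (\<lambda>n. XNn M n * YNn M n)"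
    "S = EN M (\<lambda>n. (XNn M n)\<^sup>2)" "C = (\<Sum>n\<in>UNIV. untreated_part M n)"
    "J = (\<Sum>n\<in>UNIV. XNn M n * untreated_part M n)"
  have sums: "(\<Sum>n\<in>UNIV. XNn M n * cell_integral M True n Yv) = K - J"
      "(\<Sum>n\<in>UNIV. XNn M n * cell_integral M False n Yv) = J"
      "(\<Sum>n\<in>UNIV. cell_integral M True n Yv) = E - C"
      "(\<Sum>n\<in>UNIV. cell_integral M False n Yv) = C"
      "(\<Sum>n\<in>UNIV. XNn M n * measure M (cellXN True n)) = S"
      "(\<Sum>n\<in>UNIV. XNn M n * measure M (cellXN False n)) = A - S"
    by (simp_all add: A_E_K_S_C_J_def cell_integral_True_Yv measure_cellXN_True measure_cellXN_False
        untreated_part_def EN_def sum_subtractf algebra_simps power2_eq_square)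
  have "deltaW M = ((K - J) / A - (E - C) / A * (S / A)) * A
      + (J / (1 - A) - C / (1 - A) * ((A - S) / (1 - A))) * (1 - A)"
    using EE_fun_X[of "\<lambda>x. condX M (\<lambda>\<omega>'. Yv \<omega>' * XN M \<omega>') x - condX M Yv x * condX M (XN M) x"]
    by (simp add: deltaW_def condX_Yv_XN condX_Yv condX_XN sums measure_cellX_True measure_cellX_False
        A_E_K_S_C_J_def)
  also have "\<dots> = (K - J - (E - C) * S / A) + (J - C * (A - S) / (1 - A))"
  proof -
    have cancel: "(u / B - v / B * (w / B)) * B = u - v * w / B" if "B \<noteq> 0" for u v w B :: real
      using that by (simp add: field_simps)
    have "1 - A \<noteq> 0" "A \<noteq> 0" using assms by (simp_all add: A_E_K_S_C_J_def)
    from cancel[OF this(1)] cancel[OF this(2)] show ?thesis by simp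
  qed
  finally show ?thesis by (simp add: A_E_K_S_C_J_def)
qed
end

lemma XNn_bounds:
  assumes "outcome_law M"
  shows "0 \<le> XNn M n" "XNn M n \<le> 1"
proof -
  have "0 \<le> measure M (cellXN True n)" "measure M (cellXN True n) \<le> pN M n"
    using pN_cells[OF assms, of n] by simp_all
  moreover have "0 \<le> pN M n" by (simp add: pN_def)
  ultimately show "0 \<le> XNn M n" "XNn M n \<le> 1"
    by (auto simp: XNn_cells[OF assms] divide_le_eq_1)
qed

lemma standing_EX_bounds:
  assumes "standing Ylo Yhi M"
  shows "0 < EN M (XNn M)" "EN M (XNn M) < 1"
proof -
  have law: "outcome_law M" using assms by (rule standing_outcome_law)
  obtain m where m: "0 < pN M m" "0 < XNn M m" "XNn M m < 1" using assms by (auto simp: standing_def)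
  have "pN M m * XNn M m \<le> EN M (XNn M)" "pN M m * (1 - XNn M m) \<le> (\<Sum>n\<in>UNIV. pN M n * (1 - XNn M n))"
    unfolding EN_def using XNn_bounds[OF law]
    by (auto intro!: member_le_sum simp: pN_def)
  moreover have "(\<Sum>n\<in>UNIV. pN M n * (1 - XNn M n)) = 1 - EN M (XNn M)"
    using sum_pN[OF law] by (simp add: EN_def algebra_simps sum_subtractf)
  ultimately show "0 < EN M (XNn M)" "EN M (XNn M) < 1" using m by (smt (verit) mult_pos_pos)+
qed

text \<open>This is Var(X_N) < Var(X): X is not a function of N.\<close>

lemma standing_EX2_less_EX:
  assumes "standing Ylo Yhi M"
  shows "EN M (\<lambda>n. (XNn M n)\<^sup>2) < EN M (XNn M)"
proof -
  have law: "outcome_law M" using assms by (rule standing_outcome_law)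
  obtain m where m: "0 < pN M m" "0 < XNn M m" "XNn M m < 1" using assms by (auto simp: standing_def)
  show ?thesis unfolding EN_def
  proof (rule sum_strict_mono_ex1)
    show "\<forall>n\<in>UNIV. pN M n * (XNn M n)\<^sup>2 \<le> pN M n * XNn M n"
      using XNn_bounds[OF law] by (auto intro!: mult_left_mono simp: pN_def power2_eq_square mult_left_le)
    show "\<exists>n\<in>UNIV. pN M n * (XNn M n)\<^sup>2 < pN M n * XNn M n"
      using m by (intro bexI[of _ m]) (auto simp: power2_eq_square)
  qed simp
qed

subsection \<open>Admissible untreated parts and the MOB bounds\<close>

lemma standing_cell_bounds:
  assumes "standing Ylo Yhi M"
  shows "Ylo * measure M (cellXN x n) \<le> cell_integral M x n Yv \<and> cell_integral M x n Yv \<le> Yhi * measure M (cellXN x n)"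
proof (cases "measure M (cellXN x n) = 0")
  case True
  then show ?thesis using cell_integral_null[OF standing_outcome_law[OF assms]] by simp
next
  case False
  then have pos: "0 < measure M (cellXN x n)" by (simp add: zero_less_measure_iff)
  then have "Ylo \<le> cE M (cellXN x n) Yv \<and> cE M (cellXN x n) Yv \<le> Yhi"
    using assms by (simp add: standing_def)
  moreover have "cE M (cellXN x n) Yv = cell_integral M x n Yv / measure M (cellXN x n)"
    by (simp add: cE_def cell_integral_def)
  ultimately show ?thesis
    using pos by (simp add: pos_le_divide_eq pos_divide_le_eq mult.commute)
qed

definition untreated_admissible :: "real \<Rightarrow> real \<Rightarrow> ('n::finite) outcome measure \<Rightarrow> ('n \<Rightarrow> real) \<Rightarrow> bool" where
  "untreated_admissible Ylo Yhi M c \<longleftrightarrow> (\<forall>n.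
     pN M n * max (YNn M n - Yhi * XNn M n) (Ylo * (1 - XNn M n)) \<le> c n \<and>
     c n \<le> pN M n * min (YNn M n - Ylo * XNn M n) (Yhi * (1 - XNn M n)))"

lemma cell_split_bounds_iff:
  fixes p x y c :: real
  assumes "0 \<le> p"
  shows "(Ylo * (p * (1 - x)) \<le> c \<and> c \<le> Yhi * (p * (1 - x)) \<and> Ylo * (p * x) \<le> p * y - c \<and> p * y - c \<le> Yhi * (p * x))
     \<longleftrightarrow> p * max (y - Yhi * x) (Ylo * (1 - x)) \<le> c \<and> c \<le> p * min (y - Ylo * x) (Yhi * (1 - x))"
  using assms by (simp add: max_mult_distrib_left min_mult_distrib_left algebra_simps) linarith

lemma standing_untreated_admissible:
  assumes "standing Ylo Yhi M"
  shows "untreated_admissible Ylo Yhi M (untreated_part M)"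
proof -
  have law: "outcome_law M" using assms by (rule standing_outcome_law)
  show ?thesis unfolding untreated_admissible_def
  proof
    fix n
    show "pN M n * max (YNn M n - Yhi * XNn M n) (Ylo * (1 - XNn M n)) \<le> untreated_part M n \<and>
        untreated_part M n \<le> pN M n * min (YNn M n - Ylo * XNn M n) (Yhi * (1 - XNn M n))"
      using standing_cell_bounds[OF assms, of True n] standing_cell_bounds[OF assms, of False n]
      by (subst cell_split_bounds_iff[symmetric])
        (simp_all add: pN_def measure_cellXN_True[OF law] measure_cellXN_False[OF law]
          cell_integral_True_Yv[OF law] untreated_part_def)
  qed
qed

text \<open>The untreated part of a law in which Y is mean independent of X given N.\<close>

lemma untreated_admissible_no_selection:
  assumes "standing Ylo Yhi M"
  shows "untreated_admissible Ylo Yhi M (\<lambda>n. pN M n * ((1 - XNn M n) * YNn M n))"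
  unfolding untreated_admissible_def
proof
  fix n
  have law: "outcome_law M" using assms by (rule standing_outcome_law)
  define p x y where "p = pN M n" "x = XNn M n" "y = YNn M n"
  have "Ylo * p \<le> p * y" "p * y \<le> Yhi * p"
    using standing_cell_bounds[OF assms, of True n] standing_cell_bounds[OF assms, of False n]
      pN_cells[OF law, of n] cell_integral_True_Yv[OF law, of n]
    by (simp_all add: p_x_y_def untreated_part_def algebra_simps)
  moreover have "0 \<le> x" "x \<le> 1" "0 \<le> p" using XNn_bounds[OF law] by (simp_all add: p_x_y_def pN_def)
  ultimately have "0 \<le> (1 - x) * (p * y - Ylo * p)" "0 \<le> (1 - x) * (Yhi * p - p * y)"
      "0 \<le> x * (p * y - Ylo * p)" "0 \<le> x * (Yhi * p - p * y)"
    by simp_all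
  then show "p * max (y - Yhi * x) (Ylo * (1 - x)) \<le> p * ((1 - x) * y) \<and>
      p * ((1 - x) * y) \<le> p * min (y - Ylo * x) (Yhi * (1 - x))"
    using \<open>0 \<le> p\<close> by (subst cell_split_bounds_iff[symmetric]) (simp_all add: algebra_simps)
qed

lemma untreated_admissible_Y0_bounds:
  assumes "standing Ylo Yhi M" "untreated_admissible Ylo Yhi M c"
  shows "Y0_MOB_lo Ylo Yhi M \<le> (\<Sum>n\<in>UNIV. c n) / (1 - EN M (XNn M)) \<and>
    (\<Sum>n\<in>UNIV. c n) / (1 - EN M (XNn M)) \<le> Y0_MOB_hi Ylo Yhi M"
proof -
  have law: "outcome_law M" using assms(1) by (rule standing_outcome_law)
  have "0 < 1 - EN M (XNn M)" using standing_EX_bounds[OF assms(1)] by simp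
  moreover have "EN M (\<lambda>n. max (YNn M n - Yhi * XNn M n) (Ylo * (1 - XNn M n))) \<le> (\<Sum>n\<in>UNIV. c n)"
    "(\<Sum>n\<in>UNIV. c n) \<le> EN M (\<lambda>n. min (YNn M n - Ylo * XNn M n) (Yhi * (1 - XNn M n)))"
    using assms(2) unfolding EN_def untreated_admissible_def by (auto intro: sum_mono)
  ultimately show ?thesis
    by (simp add: Y0_MOB_lo_eq[OF law] Y0_MOB_hi_eq[OF law] divide_right_mono)
qed

lemma untreated_admissible_attains:
  assumes "standing Ylo Yhi M" "Y0_MOB_lo Ylo Yhi M \<le> y" "y \<le> Y0_MOB_hi Ylo Yhi M"
  shows "\<exists>c. untreated_admissible Ylo Yhi M c \<and> (\<Sum>n\<in>UNIV. c n) / (1 - EN M (XNn M)) = y"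
proof -
  have law: "outcome_law M" using assms(1) by (rule standing_outcome_law)
  define lo where "lo n = pN M n * max (YNn M n - Yhi * XNn M n) (Ylo * (1 - XNn M n))" for n
  define up where "up n = pN M n * min (YNn M n - Ylo * XNn M n) (Yhi * (1 - XNn M n))" for n
  have B: "0 < 1 - EN M (XNn M)" using standing_EX_bounds[OF assms(1)] by simp
  have lu: "lo n \<le> up n" if "n \<in> UNIV" for n
  proof -
    have "lo n \<le> untreated_part M n" "untreated_part M n \<le> up n"
      using standing_untreated_admissible[OF assms(1)] unfolding untreated_admissible_def lo_def up_def by blast+
    then show ?thesis by linarith
  qed
  have s: "sum lo UNIV \<le> y * (1 - EN M (XNn M))" "y * (1 - EN M (XNn M)) \<le> sum up UNIV"
    using assms(2,3) B unfolding Y0_MOB_lo_eq[OF law] Y0_MOB_hi_eq[OF law] EN_def lo_def up_def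
    by (simp_all only: pos_divide_le_eq pos_le_divide_eq)
  obtain c where "\<forall>n\<in>UNIV. lo n \<le> c n \<and> c n \<le> up n" "sum c UNIV = y * (1 - EN M (XNn M))"
    using sum_attains_between[OF lu s] by blast
  then show ?thesis using B unfolding untreated_admissible_def lo_def up_def by auto
qed

subsection \<open>Laws with one atom per cell\<close>

definition cell_law :: "(bool \<times> 'n \<Rightarrow> real) \<Rightarrow> (bool \<times> 'n \<Rightarrow> real) \<Rightarrow> ('n::finite) outcome measure" where
  "cell_law w v = distr (density (count_space UNIV) (\<lambda>k. ennreal (w k))) outcome_space (\<lambda>(x, n). (x, v (x, n), n))"

context
  fixes w v :: "bool \<times> ('n::finite) \<Rightarrow> real"
  assumes w_nonneg: "\<And>k. 0 \<le> w k" and sum_w: "(\<Sum>k\<in>UNIV. w k) = 1"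
begin

lemma cell_point_measurable:
  "(\<lambda>(x, n). (x, v (x, n), n)) \<in> measurable (density (count_space UNIV) (\<lambda>k. ennreal (w k))) outcome_space"
  by (simp add: measurable_cong_sets[OF sets_density refl] space_outcome_space)

lemma integral_cell_law:
  assumes "F \<in> borel_measurable outcome_space"
  shows "(\<integral>\<omega>. F \<omega> \<partial>cell_law w v) = (\<Sum>k\<in>UNIV. w k * F (fst k, v k, snd k))"
  unfolding cell_law_def
  by (simp add: integral_distr[OF cell_point_measurable assms] integral_density w_nonneg
      lebesgue_integral_count_space_finite split_beta)

lemma cell_law_outcome_law: "outcome_law (cell_law w v)"
  unfolding outcome_law_def
proof (intro conjI)
  have "emeasure (density (count_space UNIV) (\<lambda>k. ennreal (w k))) UNIV = ennreal (\<Sum>k\<in>UNIV. w k)"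
    by (simp add: emeasure_density nn_integral_count_space_finite sum_ennreal w_nonneg)
  then have "prob_space (density (count_space UNIV) (\<lambda>k. ennreal (w k)))"
    by (intro prob_spaceI) (simp add: sum_w)
  then show "prob_space (cell_law w v)"
    unfolding cell_law_def by (rule prob_space.prob_space_distr[OF _ cell_point_measurable])
  show "sets (cell_law w v) = sets outcome_space" by (simp add: cell_law_def)
  show "integrable (cell_law w v) Yv"
    unfolding cell_law_def
    by (simp add: integrable_distr_eq[OF cell_point_measurable Yv_measurable] integrable_density
        w_nonneg integrable_count_space)
qed

lemma cell_integral_cell_law:
  assumes "f \<in> borel_measurable outcome_space"
  shows "cell_integral (cell_law w v) x n f = w (x, n) * f (x, v (x, n), n)"
proof -
  have "(\<lambda>\<omega>. indicator (cellXN x n) \<omega> * f \<omega>) \<in> borel_measurable outcome_space"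
    using cellXN_in_outcome_space assms by measurable
  moreover have "w k * (indicator (cellXN x n) (fst k, v k, snd k) * f (fst k, v k, snd k))
      = (if k = (x, n) then w (x, n) * f (x, v (x, n), n) else 0)" for k
    by (cases k) (simp add: indicator_def cellXN_def Nv_def)
  ultimately show ?thesis
    by (simp add: cell_integral_def integral_cell_law)
qed

lemma measure_cell_law: "measure (cell_law w v) (cellXN x n) = w (x, n)"
  using cell_integral_cell_law[of "\<lambda>_. 1" x n] cell_integral_one[OF cell_law_outcome_law] by simp

lemma cell_integral_cell_law_Yv: "cell_integral (cell_law w v) x n Yv = w (x, n) * v (x, n)"
  by (simp add: cell_integral_cell_law[OF Yv_measurable] Yv_def)

lemma standing_cell_law:
  assumes "\<And>k. 0 < w k \<Longrightarrow> Ylo \<le> v k \<and> v k \<le> Yhi"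
    and "\<exists>n. 0 < pN (cell_law w v) n \<and> 0 < XNn (cell_law w v) n \<and> XNn (cell_law w v) n < 1"
  shows "standing Ylo Yhi (cell_law w v)"
  unfolding standing_def
proof (intro conjI allI impI)
  show "prob_space (cell_law w v)" "integrable (cell_law w v) Yv"
    using cell_law_outcome_law by (simp_all add: outcome_law_def)
  show "sets (cell_law w v) = sets (count_space UNIV \<Otimes>\<^sub>M (lborel \<Otimes>\<^sub>M count_space UNIV))"
    by (simp add: cell_law_def outcome_space_def)
  fix x n assume "0 < measure (cell_law w v) (cellXN x n)"
  then have "0 < w (x, n)" by (simp add: measure_cell_law)
  moreover have "cE (cell_law w v) (cellXN x n) Yv = v (x, n)" if "0 < w (x, n)"
    using that by (simp add: cE_def cell_integral_def[symmetric] cell_integral_cell_law_Yv measure_cell_law)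
  ultimately show "Ylo \<le> cE (cell_law w v) (cellXN x n) Yv" "cE (cell_law w v) (cellXN x n) Yv \<le> Yhi"
    using assms(1) by simp_all
qed (use assms(2) in blast)

end

text \<open>The witness puts the whole Y-mass t of each (X, N)-cell on a single atom.\<close>

lemma exists_law_with_untreated_part:
  assumes st: "standing Ylo Yhi M" and adm: "untreated_admissible Ylo Yhi M c"
  shows "\<exists>M'. standing Ylo Yhi M' \<and> obs M' = obs M \<and> untreated_part M' = c"
proof -
  have law: "outcome_law M" using st by (rule standing_outcome_law)
  define w where "w k = (if fst k then pN M (snd k) * XNn M (snd k) else pN M (snd k) * (1 - XNn M (snd k)))" for k
  define t where "t k = (if fst k then pN M (snd k) * YNn M (snd k) - c (snd k) else c (snd k))" for k
  define M' where "M' = cell_law w (\<lambda>k. t k / w k)"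
  have w_nonneg: "0 \<le> w k" for k
    using XNn_bounds[OF law] by (simp add: w_def pN_def)
  have sum_w: "(\<Sum>k\<in>UNIV. w k) = 1"
  proof -
    have "(\<Sum>k\<in>UNIV. w k) = (\<Sum>x\<in>UNIV. \<Sum>n\<in>UNIV. w (x, n))"
      by (simp add: sum.cartesian_product UNIV_Times_UNIV[symmetric] del: UNIV_Times_UNIV)
    then show ?thesis using sum_pN[OF law] by (simp add: UNIV_bool w_def sum.distrib[symmetric] algebra_simps)
  qed
  have t_bounds: "Ylo * w k \<le> t k \<and> t k \<le> Yhi * w k" for k
    using adm cell_split_bounds_iff[of "pN M (snd k)" Ylo "XNn M (snd k)" "c (snd k)" Yhi "YNn M (snd k)"]
    by (auto simp: untreated_admissible_def w_def t_def pN_def)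
  have wt: "w k * (t k / w k) = t k" for k
    using t_bounds[of k] by (cases "w k = 0") simp_all
  have law': "outcome_law M'" unfolding M'_def by (rule cell_law_outcome_law[OF w_nonneg sum_w])
  have q': "measure M' (cellXN x n) = w (x, n)" and s': "cell_integral M' x n Yv = t (x, n)" for x n
    unfolding M'_def
    by (simp_all only: measure_cell_law[OF w_nonneg sum_w] cell_integral_cell_law_Yv[OF w_nonneg sum_w] wt)
  have pN': "pN M' = pN M"
    by (simp add: fun_eq_iff pN_cells[OF law'] q' w_def algebra_simps)
  have XNn': "XNn M' n = XNn M n" for n
    by (cases "pN M n = 0") (simp_all add: XNn_cells[OF law'] XNn_cells[OF law] pN' q' w_def)
  have YNn': "YNn M' n = YNn M n" for n
    by (cases "pN M n = 0") (simp_all add: YNn_cells[OF law'] YNn_cells[OF law] pN' s' t_def untreated_part_def)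
  have "standing Ylo Yhi M'"
    unfolding M'_def
  proof (rule standing_cell_law[OF w_nonneg sum_w])
    show "Ylo \<le> t k / w k \<and> t k / w k \<le> Yhi" if "0 < w k" for k
      using that t_bounds[of k] by (simp add: pos_le_divide_eq pos_divide_le_eq mult.commute)
    show "\<exists>n. 0 < pN (cell_law w (\<lambda>k. t k / w k)) n \<and> 0 < XNn (cell_law w (\<lambda>k. t k / w k)) n
        \<and> XNn (cell_law w (\<lambda>k. t k / w k)) n < 1"
      using st by (simp add: standing_def pN' XNn' M'_def[symmetric])
  qed
  moreover have "obs M' = obs M" by (simp add: obs_def fun_eq_iff pN' XNn' YNn')
  moreover have "untreated_part M' = c" by (simp add: fun_eq_iff untreated_part_def s' t_def)
  ultimately show ?thesis by blast
qed

subsection \<open>Identification and sharpness\<close>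

lemma obs_eqD: "obs M' = obs M \<Longrightarrow> pN M' = pN M \<and> XNn M' = XNn M \<and> YNn M' = YNn M"
  by (auto simp: obs_def fun_eq_iff)

lemma observational_functionals:
  assumes "outcome_law M" "outcome_law M'" "obs M' = obs M"
  shows "Y0_NM M' = Y0_NM M" "Y0_ER M' = Y0_ER M" "VarXN M' = VarXN M"
    "Y0_MOB_lo Ylo Yhi M' = Y0_MOB_lo Ylo Yhi M" "Y0_MOB_hi Ylo Yhi M' = Y0_MOB_hi Ylo Yhi M"
    "EN M' = EN M"
  using obs_eqD[OF assms(3)]
  by (simp_all add: Y0_NM_eq Y0_ER_eq VarXN_eq Y0_MOB_lo_eq Y0_MOB_hi_eq assms(1,2) EN_def[abs_def])

lemma standing_Y0_MOB_bounds:
  assumes "standing Ylo Yhi M"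
  shows "Y0_MOB_lo Ylo Yhi M \<le> Y0 M \<and> Y0 M \<le> Y0_MOB_hi Ylo Yhi M"
  using untreated_admissible_Y0_bounds[OF assms standing_untreated_admissible[OF assms]]
  by (simp add: Y0_eq[OF standing_outcome_law[OF assms]])

lemma Y0_NM_within_MOB:
  assumes "standing Ylo Yhi M"
  shows "Y0_MOB_lo Ylo Yhi M \<le> Y0_NM M \<and> Y0_NM M \<le> Y0_MOB_hi Ylo Yhi M"
  using untreated_admissible_Y0_bounds[OF assms untreated_admissible_no_selection[OF assms]]
  by (simp add: Y0_NM_eq[OF standing_outcome_law[OF assms]] EN_def)

lemma deltaB_eq_gap:
  assumes "standing Ylo Yhi M"
  shows "deltaB M = (1 - EE M Xv) * (Y0_NM M - Y0 M)"
proof -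
  have law: "outcome_law M" using assms by (rule standing_outcome_law)
  have "1 - EN M (XNn M) \<noteq> 0" using standing_EX_bounds[OF assms] by simp
  then show ?thesis
    by (simp add: deltaB_eq[OF law] Y0_NM_eq[OF law] Y0_eq[OF law] EE_Xv[OF law] diff_divide_distrib[symmetric])
qed

lemma deltaW_eq_gap:
  assumes "standing Ylo Yhi M" "VarXN M \<noteq> 0"
  shows "deltaW M * EE M Xv = (Y0 M - Y0_ER M) * VarXN M"
proof -
  have law: "outcome_law M" using assms(1) by (rule standing_outcome_law)
  have "EN M (XNn M) \<noteq> 0" "EN M (XNn M) \<noteq> 1" using standing_EX_bounds[OF assms(1)] by simp_all
  moreover have "EN M (\<lambda>n. (XNn M n)\<^sup>2) \<noteq> (EN M (XNn M))\<^sup>2" using assms(2) by (simp add: VarXN_eq[OF law])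
  ultimately show ?thesis
    by (simp add: deltaW_eq[OF law] Y0_eq[OF law] Y0_ER_eq[OF law] VarXN_eq[OF law] EE_Xv[OF law]
        deltaW_moment_identity)
qed

lemma Y0_eq_Y1:
  assumes "standing Ylo Yhi M" "VarXN M \<noteq> 0" "Y0 M = Y0_NM M" "Y0 M = Y0_ER M"
  shows "Y0 M = Y1 M"
proof -
  have law: "outcome_law M" using assms(1) by (rule standing_outcome_law)
  define A E K S C where "A = EN M (XNn M)" "E = EN M (YNn M)" "K = EN M (\<lambda>n. XNn M n * YNn M n)"
    "S = EN M (\<lambda>n. (XNn M n)\<^sup>2)" "C = (\<Sum>n\<in>UNIV. untreated_part M n)"
  have "A \<noteq> 0" "A \<noteq> 1" using standing_EX_bounds[OF assms(1)] by (simp_all add: A_E_K_S_C_def)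
  moreover have "S \<noteq> A\<^sup>2" using assms(2) by (simp add: VarXN_eq[OF law] A_E_K_S_C_def)
  moreover have "S \<noteq> A" using standing_EX2_less_EX[OF assms(1)] by (simp add: A_E_K_S_C_def)
  moreover have "EN M (\<lambda>n. (1 - XNn M n) * YNn M n) = E - K"
    by (simp add: A_E_K_S_C_def EN_def algebra_simps sum_subtractf)
  then have "C / (1 - A) = (E - K) / (1 - A)"
    using assms(3) by (simp add: Y0_eq[OF law] Y0_NM_eq[OF law] A_E_K_S_C_def)
  moreover have "C / (1 - A) = E - (K - A * E) / (S - A\<^sup>2) * A"
    using assms(4) by (simp add: Y0_eq[OF law] Y0_ER_eq[OF law] A_E_K_S_C_def)
  ultimately have "C / (1 - A) = (E - C) / A" by (rule Y1_moment_identity)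
  then show ?thesis by (simp add: Y0_eq[OF law] Y1_eq[OF law] A_E_K_S_C_def)
qed

lemma deltaB_sign:
  assumes "standing Ylo Yhi M"
  shows "(0 \<le> deltaB M \<longleftrightarrow> Y0 M \<le> Y0_NM M) \<and> (deltaB M \<le> 0 \<longleftrightarrow> Y0_NM M \<le> Y0 M)"
proof -
  have "0 < 1 - EE M Xv"
    using standing_EX_bounds[OF assms] EE_Xv[OF standing_outcome_law[OF assms]] by simp
  then show ?thesis by (simp add: deltaB_eq_gap[OF assms] zero_le_mult_iff mult_le_0_iff)
qed

lemma deltaW_sign:
  assumes "standing Ylo Yhi M" "VarXN M > 0"
  shows "(0 \<le> deltaW M \<longleftrightarrow> Y0_ER M \<le> Y0 M) \<and> (deltaW M \<le> 0 \<longleftrightarrow> Y0 M \<le> Y0_ER M)"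
proof -
  have EX: "0 < EE M Xv"
    using standing_EX_bounds[OF assms(1)] EE_Xv[OF standing_outcome_law[OF assms(1)]] by simp
  have "0 \<le> deltaW M \<longleftrightarrow> 0 \<le> deltaW M * EE M Xv" "deltaW M \<le> 0 \<longleftrightarrow> deltaW M * EE M Xv \<le> 0"
    using EX by (simp_all add: zero_le_mult_iff mult_le_0_iff)
  then show ?thesis
    using assms(2) by (simp add: deltaW_eq_gap[OF assms(1)] zero_le_mult_iff mult_le_0_iff)
qed

lemma deltas_sign_same_obs:
  assumes "standing Ylo Yhi M" "VarXN M > 0" "standing Ylo Yhi M'" "obs M' = obs M"
  shows "(0 \<le> deltaB M' \<longleftrightarrow> Y0 M' \<le> Y0_NM M) \<and> (deltaB M' \<le> 0 \<longleftrightarrow> Y0_NM M \<le> Y0 M') \<and>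
    (0 \<le> deltaW M' \<longleftrightarrow> Y0_ER M \<le> Y0 M') \<and> (deltaW M' \<le> 0 \<longleftrightarrow> Y0 M' \<le> Y0_ER M)"
  using observational_functionals[OF standing_outcome_law[OF assms(1)] standing_outcome_law[OF assms(3)] assms(4)]
    deltaB_sign[OF assms(3)] deltaW_sign[OF assms(3)] assms(2) by auto

lemma sharp_boundI:
  assumes st: "standing Ylo Yhi M"
    and constraint: "\<And>M'. standing Ylo Yhi M' \<Longrightarrow> obs M' = obs M \<Longrightarrow> A M' \<longleftrightarrow> Q (Y0 M')"
    and observational: "\<And>M'. standing Ylo Yhi M' \<Longrightarrow> obs M' = obs M \<Longrightarrow> lo M' = lo M \<and> hi M' = hi M"
    and interval: "\<And>y. lo M \<le> y \<and> y \<le> hi M \<longleftrightarrow>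
      Y0_MOB_lo Ylo Yhi M \<le> y \<and> y \<le> Y0_MOB_hi Ylo Yhi M \<and> Q y"
  shows "sharp_bound Ylo Yhi A lo hi M"
  unfolding sharp_bound_def
proof (intro conjI allI impI)
  fix M' assume M': "standing Ylo Yhi M' \<and> obs M' = obs M \<and> A M'"
  then have law': "outcome_law M'" by (blast intro: standing_outcome_law)
  have "Y0_MOB_lo Ylo Yhi M \<le> Y0 M' \<and> Y0 M' \<le> Y0_MOB_hi Ylo Yhi M"
    using standing_Y0_MOB_bounds[of Ylo Yhi M'] observational_functionals[OF standing_outcome_law[OF st] law']
      M' by simp
  then have "lo M \<le> Y0 M' \<and> Y0 M' \<le> hi M" using interval constraint M' by blast
  then show "lo M' \<le> Y0 M'" "Y0 M' \<le> hi M'" using observational M' by auto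
next
  fix y assume "lo M \<le> y \<and> y \<le> hi M"
  then have y: "Y0_MOB_lo Ylo Yhi M \<le> y" "y \<le> Y0_MOB_hi Ylo Yhi M" "Q y" using interval by blast+
  obtain c where c: "untreated_admissible Ylo Yhi M c" "(\<Sum>n\<in>UNIV. c n) / (1 - EN M (XNn M)) = y"
    using untreated_admissible_attains[OF st y(1,2)] by blast
  obtain M' where M': "standing Ylo Yhi M'" "obs M' = obs M" "untreated_part M' = c"
    using exists_law_with_untreated_part[OF st c(1)] by blast
  have law': "outcome_law M'" using M'(1) by (rule standing_outcome_law)
  have "Y0 M' = y"
    using c(2) M'(3) observational_functionals(6)[OF standing_outcome_law[OF st] law' M'(2)] obs_eqD[OF M'(2)]
    by (simp add: Y0_eq[OF law'])
  then show "\<exists>M'. standing Ylo Yhi M' \<and> obs M' = obs M \<and> A M' \<and> Y0 M' = y"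
    using M' constraint y(3) by blast
qed

lemma sharp_bound_self:
  "sharp_bound Ylo Yhi A lo hi M \<Longrightarrow> standing Ylo Yhi M \<Longrightarrow> A M \<Longrightarrow> lo M \<le> Y0 M \<and> Y0 M \<le> hi M"
  unfolding sharp_bound_def by blast

theorem theorem3:
  fixes M :: "('n::finite) outcome measure" and Ylo Yhi :: real
  assumes "Ylo \<le> Yhi"
    and "standing Ylo Yhi M"
    and "VarXN M > 0"
  shows
    \<comment> \<open>(1)\<close>
    "(deltaB M \<ge> 0 \<longrightarrow> Y0_MOB_lo Ylo Yhi M \<le> Y0 M \<and> Y0 M \<le> Y0_NM M) \<and>
     sharp_bound Ylo Yhi (\<lambda>M'. deltaB M' \<ge> 0) (Y0_MOB_lo Ylo Yhi) Y0_NM M \<and>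
     (deltaB M \<le> 0 \<longrightarrow> Y0_NM M \<le> Y0 M \<and> Y0 M \<le> Y0_MOB_hi Ylo Yhi M) \<and>
     sharp_bound Ylo Yhi (\<lambda>M'. deltaB M' \<le> 0) Y0_NM (Y0_MOB_hi Ylo Yhi) M \<and>
     \<comment> \<open>(2)\<close>
     (deltaW M \<ge> 0 \<longrightarrow> max (Y0_ER M) (Y0_MOB_lo Ylo Yhi M) \<le> Y0 M \<and> Y0 M \<le> Y0_MOB_hi Ylo Yhi M) \<and>
     sharp_bound Ylo Yhi (\<lambda>M'. deltaW M' \<ge> 0)
       (\<lambda>M'. max (Y0_ER M') (Y0_MOB_lo Ylo Yhi M')) (Y0_MOB_hi Ylo Yhi) M \<and>
     (deltaW M \<le> 0 \<longrightarrow> Y0_MOB_lo Ylo Yhi M \<le> Y0 M \<and> Y0 M \<le> min (Y0_ER M) (Y0_MOB_hi Ylo Yhi M)) \<and>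
     sharp_bound Ylo Yhi (\<lambda>M'. deltaW M' \<le> 0)
       (Y0_MOB_lo Ylo Yhi) (\<lambda>M'. min (Y0_ER M') (Y0_MOB_hi Ylo Yhi M')) M \<and>
     \<comment> \<open>(3)\<close>
     (deltaW M \<ge> 0 \<and> deltaB M \<ge> 0 \<longrightarrow>
        max (Y0_ER M) (Y0_MOB_lo Ylo Yhi M) \<le> Y0 M \<and> Y0 M \<le> Y0_NM M) \<and>
     sharp_bound Ylo Yhi (\<lambda>M'. deltaW M' \<ge> 0 \<and> deltaB M' \<ge> 0)
       (\<lambda>M'. max (Y0_ER M') (Y0_MOB_lo Ylo Yhi M')) Y0_NM M \<and>
     (deltaW M \<le> 0 \<and> deltaB M \<le> 0 \<longrightarrow>
        Y0_NM M \<le> Y0 M \<and> Y0 M \<le> min (Y0_ER M) (Y0_MOB_hi Ylo Yhi M)) \<and>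
     sharp_bound Ylo Yhi (\<lambda>M'. deltaW M' \<le> 0 \<and> deltaB M' \<le> 0)
       Y0_NM (\<lambda>M'. min (Y0_ER M') (Y0_MOB_hi Ylo Yhi M')) M \<and>
     \<comment> \<open>(4)\<close>
     (deltaW M \<ge> 0 \<and> deltaB M \<le> 0 \<longrightarrow>
        max (Y0_MOB_lo Ylo Yhi M) (max (Y0_ER M) (Y0_NM M)) \<le> Y0 M \<and> Y0 M \<le> Y0_MOB_hi Ylo Yhi M) \<and>
     sharp_bound Ylo Yhi (\<lambda>M'. deltaW M' \<ge> 0 \<and> deltaB M' \<le> 0)
       (\<lambda>M'. max (Y0_MOB_lo Ylo Yhi M') (max (Y0_ER M') (Y0_NM M'))) (Y0_MOB_hi Ylo Yhi) M \<and>
     (deltaW M \<le> 0 \<and> deltaB M \<ge> 0 \<longrightarrow>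
        Y0_MOB_lo Ylo Yhi M \<le> Y0 M \<and> Y0 M \<le> min (Y0_NM M) (min (Y0_ER M) (Y0_MOB_hi Ylo Yhi M))) \<and>
     sharp_bound Ylo Yhi (\<lambda>M'. deltaW M' \<le> 0 \<and> deltaB M' \<ge> 0)
       (Y0_MOB_lo Ylo Yhi) (\<lambda>M'. min (Y0_NM M') (min (Y0_ER M') (Y0_MOB_hi Ylo Yhi M'))) M \<and>
     \<comment> \<open>(5)\<close>
     (deltaW M = 0 \<longrightarrow> Y0 M = Y0_ER M) \<and>
     (deltaB M = 0 \<longrightarrow> Y0 M = Y0_NM M) \<and>
     (deltaW M = 0 \<and> deltaB M = 0 \<longrightarrow> Y0 M = Y1 M)"
proof -
  note st = assms(2) and Vp = assms(3)
  note same_obs = deltas_sign_same_obs[OF st Vp]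
    observational_functionals[OF standing_outcome_law[OF st]] standing_outcome_law
  note NM_bounds = Y0_NM_within_MOB[OF st]
  have 1: "sharp_bound Ylo Yhi (\<lambda>M'. deltaB M' \<ge> 0) (Y0_MOB_lo Ylo Yhi) Y0_NM M"
    by (rule sharp_boundI[OF st, where Q="\<lambda>y. y \<le> Y0_NM M"]) (use NM_bounds in \<open>auto simp: same_obs\<close>)
  have 2: "sharp_bound Ylo Yhi (\<lambda>M'. deltaB M' \<le> 0) Y0_NM (Y0_MOB_hi Ylo Yhi) M"
    by (rule sharp_boundI[OF st, where Q="\<lambda>y. Y0_NM M \<le> y"]) (use NM_bounds in \<open>auto simp: same_obs\<close>)
  have 3: "sharp_bound Ylo Yhi (\<lambda>M'. deltaW M' \<ge> 0)
       (\<lambda>M'. max (Y0_ER M') (Y0_MOB_lo Ylo Yhi M')) (Y0_MOB_hi Ylo Yhi) M"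
    by (rule sharp_boundI[OF st, where Q="\<lambda>y. Y0_ER M \<le> y"]) (use NM_bounds in \<open>auto simp: same_obs\<close>)
  have 4: "sharp_bound Ylo Yhi (\<lambda>M'. deltaW M' \<le> 0)
       (Y0_MOB_lo Ylo Yhi) (\<lambda>M'. min (Y0_ER M') (Y0_MOB_hi Ylo Yhi M')) M"
    by (rule sharp_boundI[OF st, where Q="\<lambda>y. y \<le> Y0_ER M"]) (use NM_bounds in \<open>auto simp: same_obs\<close>)
  have 5: "sharp_bound Ylo Yhi (\<lambda>M'. deltaW M' \<ge> 0 \<and> deltaB M' \<ge> 0)
       (\<lambda>M'. max (Y0_ER M') (Y0_MOB_lo Ylo Yhi M')) Y0_NM M"
    by (rule sharp_boundI[OF st, where Q="\<lambda>y. Y0_ER M \<le> y \<and> y \<le> Y0_NM M"]) (use NM_bounds in \<open>auto simp: same_obs\<close>)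
  have 6: "sharp_bound Ylo Yhi (\<lambda>M'. deltaW M' \<le> 0 \<and> deltaB M' \<le> 0)
       Y0_NM (\<lambda>M'. min (Y0_ER M') (Y0_MOB_hi Ylo Yhi M')) M"
    by (rule sharp_boundI[OF st, where Q="\<lambda>y. y \<le> Y0_ER M \<and> Y0_NM M \<le> y"]) (use NM_bounds in \<open>auto simp: same_obs\<close>)
  have 7: "sharp_bound Ylo Yhi (\<lambda>M'. deltaW M' \<ge> 0 \<and> deltaB M' \<le> 0)
       (\<lambda>M'. max (Y0_MOB_lo Ylo Yhi M') (max (Y0_ER M') (Y0_NM M'))) (Y0_MOB_hi Ylo Yhi) M"
    by (rule sharp_boundI[OF st, where Q="\<lambda>y. Y0_ER M \<le> y \<and> Y0_NM M \<le> y"]) (use NM_bounds in \<open>auto simp: same_obs\<close>)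
  have 8: "sharp_bound Ylo Yhi (\<lambda>M'. deltaW M' \<le> 0 \<and> deltaB M' \<ge> 0)
       (Y0_MOB_lo Ylo Yhi) (\<lambda>M'. min (Y0_NM M') (min (Y0_ER M') (Y0_MOB_hi Ylo Yhi M'))) M"
    by (rule sharp_boundI[OF st, where Q="\<lambda>y. y \<le> Y0_ER M \<and> y \<le> Y0_NM M"]) (use NM_bounds in \<open>auto simp: same_obs\<close>)
  have ER: "deltaW M = 0 \<Longrightarrow> Y0 M = Y0_ER M" and NM: "deltaB M = 0 \<Longrightarrow> Y0 M = Y0_NM M"
    using deltaW_sign[OF st Vp] deltaB_sign[OF st] by auto
  have Y1: "Y0 M = Y0_NM M \<Longrightarrow> Y0 M = Y0_ER M \<Longrightarrow> Y0 M = Y1 M"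
    using Y0_eq_Y1[OF st] Vp by simp
  show ?thesis
    using 1 2 3 4 5 6 7 8 ER NM Y1
      sharp_bound_self[OF 1 st] sharp_bound_self[OF 2 st] sharp_bound_self[OF 3 st] sharp_bound_self[OF 4 st]
      sharp_bound_self[OF 5 st] sharp_bound_self[OF 6 st] sharp_bound_self[OF 7 st] sharp_bound_self[OF 8 st]
    by auto
qed

end
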